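(* Let $\Bbbk$ be an algebraically closed field of characteristic zero and let $\mathcal{V}$ be the Virasoro algebra over $\Bbbk$. Let $M$ be a simple weight $\mathcal{V}$-module and let $\mu\in\Bbbk$ be such that $\dim M_\mu<\infty$ and $\dim M_{\mu+i}=\infty$ for every $i\in\mathbb{Z}\setminus\{0\}$. Then $\mu\notin\{-1,1\}$.
   Context: The Virasoro algebra $\mathcal{V}$ over $\Bbbk$ has basis consisting of a central element $c$ and elements $e_i$, $i\in\mathbb{Z}$, with bracket $[e_i,e_j]=(j-i)e_{i+j}+\delta_{i,-j}\frac{i^3-i}{12}c$. A weight $\mathcal{V}$-module is a module on which $e_0$ and $c$ act diagonalizably; $M_\lambda=\{m\in M: e_0m=\lambda m\}$. *)

theory Defs
  imports "HOL-Computational_Algebra.Polynomial"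
begin

definition alg_closed :: "('k::field) itself \<Rightarrow> bool" where
  "alg_closed TYPE('k) \<longleftrightarrow> (\<forall>p :: 'k poly. degree p > 0 \<longrightarrow> (\<exists>x. poly p x = 0))"

text \<open>A module over the Virasoro algebra on the vector space (UNIV :: 'm set) over 'k,
  with scalar multiplication sc. The basis element e_i acts by e i, the central element c by cc.\<close>
definition vir_module ::
  "('k::field \<Rightarrow> 'm::ab_group_add \<Rightarrow> 'm) \<Rightarrow> (int \<Rightarrow> 'm \<Rightarrow> 'm) \<Rightarrow> ('m \<Rightarrow> 'm) \<Rightarrow> bool" where
  "vir_module sc e cc \<longleftrightarrow>
     vector_space sc \<and>
     (\<forall>i. Vector_Spaces.linear sc sc (e i)) \<and> Vector_Spaces.linear sc sc cc \<and>
     (\<forall>i j v. e i (e j v) - e j (e i v) =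
        sc (of_int (j - i)) (e (i + j) v)
        + (if i = - j then sc (of_int (i^3 - i) / 12) (cc v) else 0)) \<and>
     (\<forall>i v. cc (e i v) - e i (cc v) = 0)"

definition diagonalizable :: "('k::field \<Rightarrow> 'm::ab_group_add \<Rightarrow> 'm) \<Rightarrow> ('m \<Rightarrow> 'm) \<Rightarrow> bool" where
  "diagonalizable sc f \<longleftrightarrow> module.span sc {v. \<exists>a. f v = sc a v} = UNIV"

definition weight_vir_module ::
  "('k::field \<Rightarrow> 'm::ab_group_add \<Rightarrow> 'm) \<Rightarrow> (int \<Rightarrow> 'm \<Rightarrow> 'm) \<Rightarrow> ('m \<Rightarrow> 'm) \<Rightarrow> bool" where
  "weight_vir_module sc e cc \<longleftrightarrow>
     vir_module sc e cc \<and> diagonalizable sc (e 0) \<and> diagonalizable sc cc"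

definition weight_space ::
  "('k::field \<Rightarrow> 'm::ab_group_add \<Rightarrow> 'm) \<Rightarrow> (int \<Rightarrow> 'm \<Rightarrow> 'm) \<Rightarrow> 'k \<Rightarrow> 'm set" where
  "weight_space sc e lam = {v. e 0 v = sc lam v}"

definition vir_submodule ::
  "('k::field \<Rightarrow> 'm::ab_group_add \<Rightarrow> 'm) \<Rightarrow> (int \<Rightarrow> 'm \<Rightarrow> 'm) \<Rightarrow> ('m \<Rightarrow> 'm) \<Rightarrow> 'm set \<Rightarrow> bool" where
  "vir_submodule sc e cc W \<longleftrightarrow>
     module.subspace sc W \<and> (\<forall>i. \<forall>w\<in>W. e i w \<in> W) \<and> (\<forall>w\<in>W. cc w \<in> W)"

definition simple_vir_module ::
  "('k::field \<Rightarrow> 'm::ab_group_add \<Rightarrow> 'm) \<Rightarrow> (int \<Rightarrow> 'm \<Rightarrow> 'm) \<Rightarrow> ('m \<Rightarrow> 'm) \<Rightarrow> bool" where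
  "simple_vir_module sc e cc \<longleftrightarrow>
     vir_module sc e cc \<and> (UNIV :: 'm set) \<noteq> {0} \<and>
     (\<forall>W. vir_submodule sc e cc W \<longrightarrow> W = {0} \<or> W = UNIV)"

definition fin_dim :: "('k::field \<Rightarrow> 'm::ab_group_add \<Rightarrow> 'm) \<Rightarrow> 'm set \<Rightarrow> bool" where
  "fin_dim sc W \<longleftrightarrow> (\<exists>B. finite B \<and> B \<subseteq> W \<and> module.span sc B = W)"

end

theory Submission
  imports Defs
begin

text \<open>
  The automorphism \<open>e\<^sub>i \<mapsto> -e\<^sub>-\<^sub>i, c \<mapsto> -c\<close> of the Virasoro algebra negates weights,
  so it suffices to exclude \<open>\<mu> = 1\<close>. Since \<open>M\<^sub>1\<close> is finite-dimensional and \<open>M\<^sub>0\<close> is not,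
  some nonzero \<open>v \<in> M\<^sub>0\<close> is killed by the four maps \<open>e\<^sub>1, e\<^sub>2e\<^sub>-\<^sub>1, e\<^sub>3e\<^sub>-\<^sub>2,
  e\<^sub>2e\<^sub>-\<^sub>1e\<^sub>2e\<^sub>-\<^sub>2 : M\<^sub>0 \<rightarrow> M\<^sub>1\<close>. In a simple module a vector of weight \<open>\<lambda>\<close>
  killed by \<open>e\<^sub>1\<close> and \<open>e\<^sub>2\<close> is zero or generates the module, whose weights then lie in
  \<open>\<lambda> - \<nat>\<close>. As \<open>M\<^sub>2 \<noteq> 0\<close> and \<open>M\<^sub>-\<^sub>1 \<noteq> 0\<close>, this forces in turn \<open>e\<^sub>-\<^sub>1v = 0\<close>,
  \<open>e\<^sub>2e\<^sub>-\<^sub>2v = 0\<close>, \<open>e\<^sub>-\<^sub>2v = 0\<close> and finally \<open>v = 0\<close>.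
\<close>

fun prod_sub :: "('k::field \<Rightarrow> 'm::ab_group_add \<Rightarrow> 'm) \<Rightarrow> ('m \<Rightarrow> 'm) \<Rightarrow> 'k list \<Rightarrow> 'm \<Rightarrow> 'm" where
  "prod_sub sc f [] v = v"
| "prod_sub sc f (a # as) v = f (prod_sub sc f as v) - sc a (prod_sub sc f as v)"

context vector_space
begin

lemma not_fin_dim_kernel:
  assumes W: "subspace W" and W_inf: "\<not> fin_dim scale W"
    and f: "Vector_Spaces.linear scale scale f" and fW: "f ` W \<subseteq> T" and T: "fin_dim scale T"
  shows "\<not> fin_dim scale {v\<in>W. f v = 0}"
proof
  assume "fin_dim scale {v\<in>W. f v = 0}"
  then obtain BK where BK: "finite BK" "BK \<subseteq> {v\<in>W. f v = 0}" "span BK = {v\<in>W. f v = 0}"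
    unfolding fin_dim_def by blast
  from T obtain BT where BT: "finite BT" "span BT = T"
    unfolding fin_dim_def by blast
  obtain B where B: "B \<subseteq> f ` W" "independent B" "f ` W \<subseteq> span B"
    using maximal_independent_subset by blast
  have "B \<subseteq> span BT" using B(1) fW BT(2) by blast
  then have "finite B" using independent_span_bound[OF BT(1) B(2)] by blast
  obtain C where C: "C \<subseteq> W" "finite C" "B = f ` C"
    using finite_subset_image[OF \<open>finite B\<close> B(1)] by blast
  have hom: "module_hom scale scale f" using f by (rule module_hom_linearI)
  \<comment> \<open>\<open>C\<close> consists of preimages of a basis of \<open>f ` W\<close>, so \<open>BK \<union> C\<close> spans \<open>W\<close>\<close>
  have "W \<subseteq> span (BK \<union> C)"
  proof
    fix w assume w: "w \<in> W"
    have "f w \<in> f ` span C"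
      using B(3) w module_hom.span_image[OF hom, of C] C(3) by auto
    then obtain u where u: "u \<in> span C" "f u = f w" by auto
    have "u \<in> W" using u(1) span_minimal[OF C(1) W] by blast
    then have "w - u \<in> span BK"
      using BK(3) W w u(2) by (simp add: subspace_diff module_hom.diff[OF hom])
    then have "(w - u) + u \<in> span (BK \<union> C)"
      using u(1) by (intro span_add) (auto intro: span_mono[THEN subsetD])
    then show "w \<in> span (BK \<union> C)" by simp
  qed
  moreover have "span (BK \<union> C) \<subseteq> W"
    using BK(2) C(1) by (intro span_minimal[OF _ W]) auto
  ultimately have "fin_dim scale W"
    unfolding fin_dim_def using BK(1,2) C(1,2) by (intro exI[of _ "BK \<union> C"]) auto
  with W_inf show False ..
qed

lemma not_fin_dim_common_kernel:
  assumes W: "subspace W" "\<not> fin_dim scale W" and T: "fin_dim scale T"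
    and fs: "\<And>f. f \<in> set fs \<Longrightarrow> Vector_Spaces.linear scale scale f \<and> f ` W \<subseteq> T"
  shows "subspace {v\<in>W. \<forall>f\<in>set fs. f v = 0} \<and> \<not> fin_dim scale {v\<in>W. \<forall>f\<in>set fs. f v = 0}"
  using fs
proof (induction fs)
  case Nil
  then show ?case using W by simp
next
  case (Cons f fs)
  let ?K = "{v\<in>W. \<forall>f\<in>set fs. f v = 0}"
  have K: "subspace ?K" "\<not> fin_dim scale ?K"
    using Cons.IH Cons.prems by simp_all
  have f: "Vector_Spaces.linear scale scale f" "f ` W \<subseteq> T"
    using Cons.prems by simp_all
  have eq: "{v\<in>W. \<forall>g\<in>set (f # fs). g v = 0} = {v\<in>?K. f v = 0}" by auto
  have "subspace {v\<in>?K. f v = 0}"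
    using subspace_inter[OF K(1) module_hom.subspace_kernel[OF module_hom_linearI[OF f(1)]]]
    by (simp add: Collect_conj_eq Int_assoc)
  moreover have "\<not> fin_dim scale {v\<in>?K. f v = 0}"
    using f(2) by (intro not_fin_dim_kernel[OF K f(1) _ T]) auto
  ultimately show ?case unfolding eq ..
qed

lemma exists_nonzero_if_not_fin_dim:
  assumes "subspace W" "\<not> fin_dim scale W"
  shows "\<exists>v\<in>W. v \<noteq> 0"
proof -
  have "W \<noteq> {0}"
    using assms(2) unfolding fin_dim_def by (metis empty_subsetI finite.emptyI span_empty)
  then show ?thesis
    using subspace_0[OF assms(1)] by blast
qed

lemma exists_nonzero_in_common_kernel:
  assumes "subspace W" "\<not> fin_dim scale W" "fin_dim scale T"
    and "\<And>f. f \<in> set fs \<Longrightarrow> Vector_Spaces.linear scale scale f \<and> f ` W \<subseteq> T"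
  shows "\<exists>v\<in>W. v \<noteq> 0 \<and> (\<forall>f\<in>set fs. f v = 0)"
proof -
  let ?K = "{v\<in>W. \<forall>f\<in>set fs. f v = 0}"
  have "subspace ?K" "\<not> fin_dim scale ?K"
    using not_fin_dim_common_kernel[of W T fs] assms by blast+
  then obtain v where "v \<in> ?K" "v \<noteq> 0"
    using exists_nonzero_if_not_fin_dim by blast
  then show ?thesis by blast
qed

lemma linear_prod_sub:
  assumes "Vector_Spaces.linear scale scale f"
  shows "Vector_Spaces.linear scale scale (prod_sub scale f as)"
proof -
  interpret f: module_hom scale scale f using assms by (rule module_hom_linearI)
  have "prod_sub scale f as (x + y) = prod_sub scale f as x + prod_sub scale f as y" for x y
    by (induction as) (simp_all add: f.add scale_right_distrib algebra_simps)
  moreover have "prod_sub scale f as (c *s x) = c *s prod_sub scale f as x" for c x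
    by (induction as) (simp_all add: f.scale scale_right_diff_distrib scale_left_commute)
  ultimately show ?thesis
    using vector_space_axioms by (simp add: Vector_Spaces.linear_iff)
qed

lemma prod_sub_commute_linear:
  assumes "Vector_Spaces.linear scale scale g" and "\<And>v. g (f v) = f (g v)"
  shows "prod_sub scale f as (g v) = g (prod_sub scale f as v)"
  by (induction as) (simp_all add: assms(2) module_hom.diff[OF module_hom_linearI[OF assms(1)]]
      module_hom.scale[OF module_hom_linearI[OF assms(1)]])

lemma prod_sub_commute:
  assumes "Vector_Spaces.linear scale scale f"
  shows "prod_sub scale f as (prod_sub scale f bs v) = prod_sub scale f bs (prod_sub scale f as v)"
proof (rule prod_sub_commute_linear[OF linear_prod_sub[OF assms]])
  show "prod_sub scale f bs (f v) = f (prod_sub scale f bs v)" for v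
    by (rule prod_sub_commute_linear[OF assms]) (rule refl)
qed

lemma prod_sub_append: "prod_sub scale f (as @ bs) v = prod_sub scale f as (prod_sub scale f bs v)"
  by (induction as) simp_all

lemma prod_sub_eigenvector:
  assumes "Vector_Spaces.linear scale scale f" and "f v = b *s v"
  shows "prod_sub scale f as v = (\<Prod>a\<leftarrow>as. b - a) *s v"
  by (induction as) (simp_all add: assms(2) module_hom.scale[OF module_hom_linearI[OF assms(1)]]
      scale_left_diff_distrib[symmetric] left_diff_distrib)

end

definition vir_twist :: "(int \<Rightarrow> 'm::ab_group_add \<Rightarrow> 'm) \<Rightarrow> int \<Rightarrow> 'm \<Rightarrow> 'm" where
  "vir_twist e i = - e (- i)"

locale virasoro_module =
  fixes sc :: "'k::field_char_0 \<Rightarrow> 'm::ab_group_add \<Rightarrow> 'm"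
    and e :: "int \<Rightarrow> 'm \<Rightarrow> 'm" and cc :: "'m \<Rightarrow> 'm"
  assumes vir_module: "vir_module sc e cc"
begin

sublocale vector_space sc
  using vir_module by (simp add: vir_module_def)

lemma linear_e: "Vector_Spaces.linear sc sc (e i)"
  and linear_cc: "Vector_Spaces.linear sc sc cc"
  using vir_module by (simp_all add: vir_module_def)

sublocale e: module_hom sc sc "e i" for i
  using linear_e by (rule module_hom_linearI)

sublocale cc: module_hom sc sc cc
  using linear_cc by (rule module_hom_linearI)

sublocale prod_sub: module_hom sc sc "prod_sub sc (e 0) as" for as
  using linear_prod_sub[OF linear_e] by (rule module_hom_linearI)

lemma e_commutator:
  "e i (e j v) = e j (e i v) + sc (of_int (j - i)) (e (i + j) v)
     + (if i = - j then sc (of_int (i^3 - i) / 12) (cc v) else 0)"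
  using vir_module unfolding vir_module_def by (simp add: algebra_simps)

lemma e_commutator_nonzero_sum:
  "i \<noteq> - j \<Longrightarrow> e i (e j v) = e j (e i v) + sc (of_int (j - i)) (e (i + j) v)"
  using e_commutator[of i j v] by simp

lemma cc_e: "cc (e i v) = e i (cc v)"
  using vir_module unfolding vir_module_def by simp

lemma e_weight:
  assumes "e 0 v = sc a v"
  shows "e 0 (e j v) = sc (a + of_int j) (e j v)"
  using e_commutator[of 0 j v] assms by (simp add: e.scale scale_left_distrib)

lemma e_index_add_eq_0:
  assumes "e i v = 0" "e j v = 0" "i \<noteq> j" "i \<noteq> - j"
  shows "e (i + j) v = 0"
  using e_commutator_nonzero_sum[of i j v] assms by simp

lemma e_pos_eq_0:
  assumes "e 1 x = 0" "e 2 x = 0" "k > 0"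
  shows "e k x = 0"
proof -
  have "e (int n + 1) x = 0" for n
  proof (induction n rule: less_induct)
    case (less n)
    show ?case
    proof (cases "n \<le> 1")
      case True
      then show ?thesis using assms by (cases n) auto
    next
      case False
      then obtain m where "n = Suc m" "m \<ge> 1" by (cases n) auto
      then show ?thesis
        using e_index_add_eq_0[OF assms(1) less[of m]] by (simp add: add.commute)
    qed
  qed
  from this[of "nat (k - 1)"] show ?thesis using assms(3) by simp
qed

inductive_set lowering_closure :: "'m \<Rightarrow> 'm set" for x where
  base: "x \<in> lowering_closure x"
| scale: "u \<in> lowering_closure x \<Longrightarrow> sc r u \<in> lowering_closure x"
| add: "u \<in> lowering_closure x \<Longrightarrow> w \<in> lowering_closure x \<Longrightarrow> u + w \<in> lowering_closure x"
| lower: "j \<le> 0 \<Longrightarrow> u \<in> lowering_closure x \<Longrightarrow> e j u \<in> lowering_closure x"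
| central: "u \<in> lowering_closure x \<Longrightarrow> cc u \<in> lowering_closure x"

lemma zero_in_lowering_closure: "0 \<in> lowering_closure x"
  using lowering_closure.scale[OF lowering_closure.base, where r=0] by simp

lemma e_in_lowering_closure:
  assumes x: "\<And>k. k > 0 \<Longrightarrow> e k x = 0" and u: "u \<in> lowering_closure x"
  shows "e i u \<in> lowering_closure x"
  using u
proof (induction arbitrary: i rule: lowering_closure.induct)
  case base
  then show ?case
    using x zero_in_lowering_closure lowering_closure.lower lowering_closure.base
    by (cases "i > 0") auto
next
  case (scale u r)
  then show ?case by (simp add: e.scale lowering_closure.scale)
next
  case (add u w)
  then show ?case by (simp add: e.add lowering_closure.add)
next
  case (lower j u)
  have "e (i + j) u \<in> lowering_closure x"
    using lower by (cases "i + j > 0") (auto intro: lowering_closure.lower)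
  moreover have "(if i = - j then sc (of_int (i^3 - i) / 12) (cc u) else 0) \<in> lowering_closure x"
    using lower zero_in_lowering_closure by (simp add: lowering_closure.central lowering_closure.scale)
  ultimately show ?case
    using lower e_commutator[of i j u]
    by (simp add: lowering_closure.add lowering_closure.scale lowering_closure.lower)
next
  case (central u)
  then show ?case by (simp add: cc_e[symmetric] lowering_closure.central)
qed

lemma vir_submodule_lowering_closure:
  assumes "\<And>k. k > 0 \<Longrightarrow> e k x = 0"
  shows "vir_submodule sc e cc (lowering_closure x)"
  unfolding vir_submodule_def subspace_def
  using assms zero_in_lowering_closure
  by (auto intro: e_in_lowering_closure lowering_closure.add lowering_closure.scale
      lowering_closure.central)

lemma prod_sub_e0_e:
  "prod_sub sc (e 0) (map (\<lambda>a. a + of_int j) as) (e j v) = e j (prod_sub sc (e 0) as v)"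
proof (induction as)
  case (Cons a as)
  let ?w = "prod_sub sc (e 0) as v"
  have "e 0 (e j ?w) - sc (a + of_int j) (e j ?w) = e j (e 0 ?w) - sc a (e j ?w)"
    using e_commutator[of 0 j ?w] by (simp add: scale_left_distrib)
  then show ?case by (simp add: Cons e.diff e.scale)
qed simp

lemma lowering_closure_annihilated:
  assumes x: "e 0 x = sc lam x" and u: "u \<in> lowering_closure x"
  shows "\<exists>as. set as \<subseteq> range (\<lambda>n. lam - of_nat n) \<and> prod_sub sc (e 0) as u = 0"
  using u
proof (induction rule: lowering_closure.induct)
  case base
  have "set [lam] \<subseteq> range (\<lambda>n. lam - of_nat n)" by (auto intro: range_eqI[of _ _ 0])
  then show ?case using x by (intro exI[of _ "[lam]"]) simp
next
  case (scale u r)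
  then show ?case by (metis prod_sub.scale scale_zero_right)
next
  case (add u w)
  then obtain as bs where "set as \<subseteq> range (\<lambda>n. lam - of_nat n)" "prod_sub sc (e 0) as u = 0"
    "set bs \<subseteq> range (\<lambda>n. lam - of_nat n)" "prod_sub sc (e 0) bs w = 0" by blast
  moreover have "prod_sub sc (e 0) (bs @ as) (u + w)
      = prod_sub sc (e 0) bs (prod_sub sc (e 0) as u) + prod_sub sc (e 0) as (prod_sub sc (e 0) bs w)"
    by (simp add: prod_sub_append prod_sub.add prod_sub_commute[OF linear_e])
  ultimately show ?case
    by (intro exI[of _ "bs @ as"]) simp
next
  case (lower j u)
  then obtain as where as: "set as \<subseteq> range (\<lambda>n. lam - of_nat n)" "prod_sub sc (e 0) as u = 0"
    by blast
  have "lam - of_nat n + of_int j = lam - of_nat (n + nat (- j))" for n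
    using lower(1) by simp
  then have "set (map (\<lambda>a. a + of_int j) as) \<subseteq> range (\<lambda>n. lam - of_nat n)"
    using as(1) by (auto simp del: of_nat_add)
  then show ?case
    using as(2) prod_sub_e0_e[of j as u] by (intro exI[of _ "map (\<lambda>a. a + of_int j) as"]) simp
next
  case (central u)
  have "prod_sub sc (e 0) as (cc u) = cc (prod_sub sc (e 0) as u)" for as
    by (rule prod_sub_commute_linear[OF linear_cc]) (rule cc_e)
  with central show ?case by (metis cc.zero)
qed

lemma highest_weight_no_higher_weight:
  assumes simple: "simple_vir_module sc e cc"
    and x: "x \<noteq> 0" "e 0 x = sc lam x" "\<And>k. k > 0 \<Longrightarrow> e k x = 0"
    and y: "e 0 y = sc (lam + of_nat k) y" and k: "k > 0"
  shows "y = 0"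
proof -
  have "lowering_closure x = UNIV"
    using simple vir_submodule_lowering_closure[OF x(3)] x(1) lowering_closure.base
    unfolding simple_vir_module_def by blast
  then obtain as where as: "set as \<subseteq> range (\<lambda>n. lam - of_nat n)" "prod_sub sc (e 0) as y = 0"
    using lowering_closure_annihilated[OF x(2)] by blast
  then have "(\<Prod>a\<leftarrow>as. lam + of_nat k - a) = 0 \<or> y = 0"
    using prod_sub_eigenvector[OF linear_e y] by simp
  moreover have "lam + of_nat k \<noteq> lam - of_nat n" for n
  proof
    assume "lam + of_nat k = lam - of_nat n"
    then have "of_nat (k + n) = (0::'k)" by (simp add: algebra_simps)
    with k show False by (simp only: of_nat_eq_0_iff)
  qed
  then have "lam + of_nat k \<notin> set as"
    using as(1) by blast
  then have "(\<Prod>a\<leftarrow>as. lam + of_nat k - a) \<noteq> 0"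
    by (auto simp: prod_list_zero_iff)
  ultimately show "y = 0" by simp
qed

lemma highest_weight_vector_eq_0:
  assumes simple: "simple_vir_module sc e cc"
    and x: "e 0 x = sc lam x" "e 1 x = 0" "e 2 x = 0"
    and y: "y \<noteq> 0" "e 0 y = sc (lam + of_nat k) y" and k: "k > 0"
  shows "x = 0"
  using highest_weight_no_higher_weight[OF simple _ x(1) e_pos_eq_0[OF x(2,3)] y(2) k] y(1) by blast

lemma vir_module_twist: "vir_module sc (vir_twist e) (- cc)"
  unfolding vir_module_def
proof (intro conjI allI)
  show "vector_space sc" by (rule vector_space_axioms)
  show "Vector_Spaces.linear sc sc (vir_twist e i)" for i
    using vector_space_axioms
    by (simp add: Vector_Spaces.linear_iff vir_twist_def e.add e.scale)
  show "Vector_Spaces.linear sc sc (- cc)"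
    using vector_space_axioms
    by (simp add: Vector_Spaces.linear_iff cc.add cc.scale)
  show "(- cc) (vir_twist e i v) - vir_twist e i ((- cc) v) = 0" for i v
    by (simp add: vir_twist_def cc.neg e.neg cc_e)
  fix i j :: int and v
  have "(- i)^3 - - i = - (i^3 - i)"
    by (simp add: power3_eq_cube)
  then have cubic: "sc (of_int ((- i)^3 - - i) / 12) w = - sc (of_int (i^3 - i) / 12) w" for w
    by (simp only: of_int_minus minus_divide_left[symmetric] scale_minus_left)
  have coeff: "sc (of_int (- j - - i)) w = - sc (of_int (j - i)) w" for w
    by (simp flip: scale_minus_left)
  have "vir_twist e i (vir_twist e j v) - vir_twist e j (vir_twist e i v)
      = e (- i) (e (- j) v) - e (- j) (e (- i) v)"
    by (simp add: vir_twist_def e.neg)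
  also have "\<dots> = sc (of_int (- j - - i)) (e (- i + - j) v)
      + (if - i = - (- j) then sc (of_int ((- i)^3 - - i) / 12) (cc v) else 0)"
    using vir_module unfolding vir_module_def by blast
  also have "\<dots> = sc (of_int (j - i)) (vir_twist e (i + j) v)
      + (if i = - j then sc (of_int (i^3 - i) / 12) ((- cc) v) else 0)"
    by (simp only: cubic coeff) (simp add: vir_twist_def)
  finally show "vir_twist e i (vir_twist e j v) - vir_twist e j (vir_twist e i v)
      = sc (of_int (j - i)) (vir_twist e (i + j) v)
        + (if i = - j then sc (of_int (i^3 - i) / 12) ((- cc) v) else 0)" .
qed

lemma vir_submodule_twist_iff:
  "vir_submodule sc (vir_twist e) (- cc) W \<longleftrightarrow> vir_submodule sc e cc W"
proof -
  have "(\<forall>i. \<forall>w\<in>W. - e (- i) w \<in> W) \<longleftrightarrow> (\<forall>i. \<forall>w\<in>W. e i w \<in> W)"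
    and "(\<forall>w\<in>W. - cc w \<in> W) \<longleftrightarrow> (\<forall>w\<in>W. cc w \<in> W)" if "subspace W"
    using subspace_neg[OF that] by (metis minus_minus)+
  then show ?thesis
    unfolding vir_submodule_def vir_twist_def by auto
qed

lemma simple_vir_module_twist:
  "simple_vir_module sc e cc \<Longrightarrow> simple_vir_module sc (vir_twist e) (- cc)"
  using vir_module_twist by (simp add: simple_vir_module_def vir_submodule_twist_iff)

lemma weight_space_twist: "weight_space sc (vir_twist e) a = weight_space sc e (- a)"
  unfolding weight_space_def vir_twist_def by (auto simp: scale_minus_left) (metis minus_minus)

lemma lowest_weight_vector_eq_0:
  assumes simple: "simple_vir_module sc e cc"
    and x: "e 0 x = sc lam x" "e (- 1) x = 0" "e (- 2) x = 0"
    and y: "y \<noteq> 0" "e 0 y = sc (lam - of_nat k) y" and k: "k > 0"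
  shows "x = 0"
proof -
  interpret twisted: virasoro_module sc "vir_twist e" "- cc"
    by unfold_locales (rule vir_module_twist)
  show ?thesis
  proof (rule twisted.highest_weight_vector_eq_0[OF simple_vir_module_twist[OF simple] _ _ _ y(1) _ k])
    show "vir_twist e 0 x = sc (- lam) x"
      using x(1) by (simp add: vir_twist_def)
    show "vir_twist e 1 x = 0" "vir_twist e 2 x = 0"
      using x(2,3) by (simp_all add: vir_twist_def)
    show "vir_twist e 0 y = sc (- lam + of_nat k) y"
      using y(2) by (simp add: vir_twist_def flip: scale_minus_left)
  qed
qed

lemma subspace_weight_space: "subspace (weight_space sc e a)"
  unfolding subspace_def weight_space_def
  by (simp add: e.add e.scale scale_right_distrib scale_left_commute)

lemma e_weight_space:
  "v \<in> weight_space sc e a \<Longrightarrow> e j v \<in> weight_space sc e (a + of_int j)"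
  unfolding weight_space_def by (simp add: e_weight)

text \<open>Since \<open>[e\<^sub>1, e\<^sub>-\<^sub>1] = -2e\<^sub>0\<close> kills \<open>u\<close>, \<open>e\<^sub>-\<^sub>1u\<close> is a highest weight vector of weight \<open>-1\<close>.\<close>

lemma e_minus_1_eq_0:
  assumes simple: "simple_vir_module sc e cc"
    and u: "e 0 u = 0" "e 1 u = 0" "e 2 (e (- 1) u) = 0"
    and y: "y \<noteq> 0" "e 0 y = sc (of_nat k) y"
  shows "e (- 1) u = 0"
proof (rule highest_weight_vector_eq_0[OF simple _ _ u(3) y(1)])
  show "e 0 (e (- 1) u) = sc (- 1) (e (- 1) u)"
    using e_weight[of u 0 "- 1"] u(1) by simp
  show "e 1 (e (- 1) u) = 0"
    using e_commutator[of 1 "- 1" u] u(1,2) by simp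
  show "e 0 y = sc (- 1 + of_nat (Suc k)) y"
    using y(2) by simp
qed simp

lemma weight_minus_2_vector_eq_0:
  assumes simple: "simple_vir_module sc e cc"
    and x: "e 0 x = sc (- 2) x" "e 1 x = 0" "e 3 x = 0" "e 2 (e (- 1) (e 2 x)) = 0"
    and y: "y \<noteq> 0" "e 0 y = sc 2 y"
  shows "x = 0"
proof -
  have x4: "e 4 x = 0" using e_index_add_eq_0[OF x(2,3)] by simp
  have x5: "e 5 x = 0" using e_index_add_eq_0[OF x(2) x4] by simp
  define z where "z = e 2 x"
  have z0: "e 0 z = 0" using e_weight[OF x(1), of 2] by (simp add: z_def)
  have z1: "e 1 z = 0" using e_commutator_nonzero_sum[of 1 2 x] x(2,3) by (simp add: z_def)
  have z3: "e 3 z = 0" using e_commutator_nonzero_sum[of 3 2 x] x(3) x5 by (simp add: z_def)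
  have "e (- 1) z = 0"
    using e_minus_1_eq_0[OF simple z0 z1 _ y(1), of 2] x(4) y(2) by (simp add: z_def)
  then have "e 2 z = 0" using e_index_add_eq_0[OF _ z3, of "- 1"] by simp
  then have "z = 0"
    using highest_weight_vector_eq_0[OF simple _ z1 _ y(1), of 0 2] z0 y(2) by simp
  then show "x = 0"
    using highest_weight_vector_eq_0[OF simple x(1,2) _ y(1), of 4] y(2) by (simp add: z_def)
qed

lemma weight_zero_vector_eq_0:
  assumes simple: "simple_vir_module sc e cc"
    and v: "e 0 v = 0" "e 1 v = 0" "e 2 (e (- 1) v) = 0" "e 3 (e (- 2) v) = 0"
      "e 2 (e (- 1) (e 2 (e (- 2) v))) = 0"
    and y: "y \<noteq> 0" "e 0 y = sc 2 y" and y': "y' \<noteq> 0" "e 0 y' = sc (- 1) y'"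
  shows "v = 0"
proof -
  have v1: "e (- 1) v = 0"
    using e_minus_1_eq_0[OF simple v(1-3) y(1), of 2] y(2) by simp
  have "e 1 (e (- 2) v) = 0"
    using e_commutator_nonzero_sum[of 1 "- 2" v] v(2) v1 by simp
  then have "e (- 2) v = 0"
    using weight_minus_2_vector_eq_0[OF simple _ _ v(4) v(5) y] e_weight[of v 0 "- 2"] v(1) by simp
  then show "v = 0"
    using lowest_weight_vector_eq_0[OF simple _ v1 _ y'(1), of 0 1] v(1) y'(2) by simp
qed

lemma fin_dim_weight_1_not_isolated:
  assumes simple: "simple_vir_module sc e cc"
    and "fin_dim sc (weight_space sc e 1)" "\<not> fin_dim sc (weight_space sc e 0)"
    and "\<not> fin_dim sc (weight_space sc e 2)" "\<not> fin_dim sc (weight_space sc e (- 1))"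
  shows False
proof -
  obtain y where y: "y \<noteq> 0" "e 0 y = sc 2 y"
    using exists_nonzero_if_not_fin_dim[OF subspace_weight_space assms(4)]
    by (auto simp: weight_space_def)
  obtain y' where y': "y' \<noteq> 0" "e 0 y' = sc (- 1) y'"
    using exists_nonzero_if_not_fin_dim[OF subspace_weight_space assms(5)]
    by (auto simp: weight_space_def)
  let ?fs = "[e 1, e 2 \<circ> e (- 1), e 3 \<circ> e (- 2), e 2 \<circ> e (- 1) \<circ> e 2 \<circ> e (- 2)]"
  have "e 1 v \<in> weight_space sc e 1" "e 2 (e (- 1) v) \<in> weight_space sc e 1"
    "e 3 (e (- 2) v) \<in> weight_space sc e 1" "e 2 (e (- 1) (e 2 (e (- 2) v))) \<in> weight_space sc e 1"
    if "v \<in> weight_space sc e 0" for v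
    using e_weight_space[OF that, of 1] e_weight_space[OF e_weight_space[OF that, of "- 1"], of 2]
      e_weight_space[OF e_weight_space[OF that, of "- 2"], of 3]
      e_weight_space[OF e_weight_space[OF e_weight_space[OF e_weight_space[OF that,
        of "- 2"], of 2], of "- 1"], of 2]
    by simp_all
  then have maps: "Vector_Spaces.linear sc sc f \<and> f ` weight_space sc e 0 \<subseteq> weight_space sc e 1"
    if "f \<in> set ?fs" for f
    using that by (auto intro!: Vector_Spaces.linear_compose linear_e)
  obtain v where "v \<in> weight_space sc e 0" "v \<noteq> 0" "\<forall>f\<in>set ?fs. f v = 0"
    using exists_nonzero_in_common_kernel[OF subspace_weight_space assms(3,2) maps] by blast
  then show False
    using weight_zero_vector_eq_0[OF simple _ _ _ _ _ y y'] by (simp add: weight_space_def)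
qed

end

theorem lemma4:
  fixes sc :: "'k::field_char_0 \<Rightarrow> 'm::ab_group_add \<Rightarrow> 'm"
    and e :: "int \<Rightarrow> 'm \<Rightarrow> 'm" and cc :: "'m \<Rightarrow> 'm" and \<mu> :: 'k
  assumes "alg_closed TYPE('k)"
    and "weight_vir_module sc e cc"
    and "simple_vir_module sc e cc"
    and "fin_dim sc (weight_space sc e \<mu>)"
    and "\<And>i::int. i \<noteq> 0 \<Longrightarrow> \<not> fin_dim sc (weight_space sc e (\<mu> + of_int i))"
  shows "\<mu> \<noteq> -1 \<and> \<mu> \<noteq> 1"
proof -
  interpret virasoro_module sc e cc
    using assms(2) by unfold_locales (simp add: weight_vir_module_def)
  interpret twisted: virasoro_module sc "vir_twist e" "- cc"
    by unfold_locales (rule vir_module_twist)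
  have "\<mu> \<noteq> 1"
  proof
    assume "\<mu> = 1"
    then show False
      using fin_dim_weight_1_not_isolated[OF assms(3)] assms(4) assms(5)[of "- 1"]
        assms(5)[of 1] assms(5)[of "- 2"] by simp
  qed
  moreover have "\<mu> \<noteq> - 1"
  proof
    assume "\<mu> = - 1"
    then show False
      using twisted.fin_dim_weight_1_not_isolated[OF simple_vir_module_twist[OF assms(3)]]
        assms(4) assms(5)[of 1] assms(5)[of "- 1"] assms(5)[of 2]
      by (simp add: weight_space_twist)
  qed
  ultimately show ?thesis by simp
qed

end
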